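(* Let $0<\phi<\pi/6$ and let $H\in\mathcal H$, i.e. $H(p,t)$ is analytic in $p\in\mathcal S_\phi$ and $|H(p,t)|<C|p|^{\alpha-1}e^{\rho|p|}$ for some positive constants $C,\alpha,\rho$. Let $F\in\mathcal A_\phi$. Then for $\nu>\rho+1$, $H*F\in\mathcal A_\phi$ and $$\|H*F\|_\nu\le\||H|*|F|\|_\nu\le K\,C\,\Gamma(\alpha)(\nu-\rho)^{-\alpha}\|F\|_\nu,$$ where $K>0$ is a constant not depending on $\nu$ or $F$.
   Context: $\mathcal S_\phi=\{p:\arg p\in(-\phi,\phi),0<|p|<\infty\}$, $T>0$, $\mathcal K=\overline{\mathcal S_\phi}\times[0,T]$. For $\nu>0$, $\|G\|_\nu=M_0\sup_{(p,t)\in\mathcal K}(1+|p|^2)e^{-\nu|p|}|G(p,t)|$ (also used for continuous functions on $\mathcal K$), with $M_0=\sup_{s\ge0}\frac{2(1+s^2)(\ln(1+s^2)+s\arctan s)}{s(s^2+4)}$. $\mathcal A_\phi$ is the Banach space of functions $F(p,t)$ analytic in $p$ on $\mathcal S_\phi$ and continuous on $\overline{\mathcal S_\phi}$ for each $t\in[0,T]$, with $\|F\|_\nu<\infty$. Convolution: $(H*F)(p,t)=\int_0^pH(s,t)F(p-s,t)\,ds$ along the segment $[0,p]$; for $p=|p|e^{i\theta}$, $(|H|*|F|)(p,t)=\int_0^{|p|}|H(se^{i\theta},t)||F(p-se^{i\theta},t)|\,ds$. *)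

theory Defs
  imports "HOL-Complex_Analysis.Complex_Analysis"
begin

definition sector :: "real \<Rightarrow> complex set" where
  "sector \<phi> = {p. p \<noteq> 0 \<and> \<bar>Arg p\<bar> < \<phi>}"

definition Kset :: "real \<Rightarrow> real \<Rightarrow> (complex \<times> real) set" where
  "Kset \<phi> T = closure (sector \<phi>) \<times> {0..T}"

definition M0 :: real where
  "M0 = (SUP s\<in>{0::real..}. 2 * (1 + s\<^sup>2) * (ln (1 + s\<^sup>2) + s * arctan s) / (s * (s\<^sup>2 + 4)))"

definition weighted :: "real \<Rightarrow> (complex \<Rightarrow> real \<Rightarrow> 'a::real_normed_vector) \<Rightarrow> complex \<times> real \<Rightarrow> real" where
  "weighted \<nu> G = (\<lambda>(p,t). (1 + (cmod p)\<^sup>2) * exp (- \<nu> * cmod p) * norm (G p t))"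

definition nu_bounded :: "real \<Rightarrow> real \<Rightarrow> real \<Rightarrow> (complex \<Rightarrow> real \<Rightarrow> 'a::real_normed_vector) \<Rightarrow> bool" where
  "nu_bounded \<phi> T \<nu> G = bdd_above (weighted \<nu> G ` Kset \<phi> T)"

definition nu_norm :: "real \<Rightarrow> real \<Rightarrow> real \<Rightarrow> (complex \<Rightarrow> real \<Rightarrow> 'a::real_normed_vector) \<Rightarrow> real" where
  "nu_norm \<phi> T \<nu> G = M0 * (SUP x\<in>Kset \<phi> T. weighted \<nu> G x)"

definition A_phi :: "real \<Rightarrow> real \<Rightarrow> real \<Rightarrow> (complex \<Rightarrow> real \<Rightarrow> complex) \<Rightarrow> bool" where
  "A_phi \<phi> T \<nu> F \<longleftrightarrow>
     (\<forall>t\<in>{0..T}. (\<lambda>p. F p t) holomorphic_on sector \<phi> \<and>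
                 continuous_on (closure (sector \<phi>)) (\<lambda>p. F p t)) \<and>
     nu_bounded \<phi> T \<nu> F"

definition in_H :: "real \<Rightarrow> real \<Rightarrow> (complex \<Rightarrow> real \<Rightarrow> complex) \<Rightarrow> real \<Rightarrow> real \<Rightarrow> real \<Rightarrow> bool" where
  "in_H \<phi> T H C \<alpha> \<rho> \<longleftrightarrow>
     (\<forall>t\<in>{0..T}. (\<lambda>p. H p t) holomorphic_on sector \<phi> \<and>
                 continuous_on (closure (sector \<phi>) - {0}) (\<lambda>p. H p t) \<and>
                 (\<forall>p\<in>sector \<phi>. cmod (H p t) < C * cmod p powr (\<alpha> - 1) * exp (\<rho> * cmod p)))"

definition conv :: "(complex \<Rightarrow> real \<Rightarrow> complex) \<Rightarrow> (complex \<Rightarrow> real \<Rightarrow> complex) \<Rightarrow> complex \<Rightarrow> real \<Rightarrow> complex" where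
  "conv H F p t = contour_integral (linepath 0 p) (\<lambda>s. H s t * F (p - s) t)"

definition absconv :: "(complex \<Rightarrow> real \<Rightarrow> complex) \<Rightarrow> (complex \<Rightarrow> real \<Rightarrow> complex) \<Rightarrow> complex \<Rightarrow> real \<Rightarrow> real" where
  "absconv H F p t = integral {0..cmod p}
      (\<lambda>s. cmod (H (of_real s * sgn p) t) * cmod (F (p - of_real s * sgn p) t))"

end

theory Submission
  imports Defs
begin

text \<open>
  Substituting s = u p turns (|H| * |F|)(p) into |p| times the integral over u in [0,1] of
  |H(u p)| |F((1-u) p)|. Inserting |H(q)| <= C |q|^(alpha-1) e^(rho |q|) and
  |F(q)| <= ||F|| e^(nu |q|) / (1 + |q|^2) and multiplying by the weight (1 + |p|^2) e^(-nu |p|),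
  the exponentials combine to e^(-mu |p| u) with mu = nu - rho >= 1. For u <= 1/2 the quotient
  of the polynomial weights is at most 4, and e^(-x) <= c (1 + x)^(-alpha-1) leaves an integral
  that can be computed in closed form and is at most mu^(-alpha)/alpha; for u > 1/2 the factor
  e^(-mu |p| / 2) absorbs the weight. Integrating over u gives the bound with
  K Gamma(alpha) = (4 (alpha+1)^(alpha+1) + (2 (alpha+2))^(alpha+2)) / alpha.
  H * F is analytic because it is the locally uniform limit, as a -> 0+, of the integrals over
  u in [a, 1-a], which may be differentiated under the integral sign.
\<close>

section \<open>Geometry of the sector\<close>

lemma open_sector:
  assumes "\<phi> \<le> pi"
  shows "open (sector \<phi>)"
proof -
  have eq: "sector \<phi> = (- \<real>\<^sub>\<le>\<^sub>0) \<inter> Arg -` {-\<phi><..<\<phi>}"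
  proof (intro set_eqI iffI)
    fix p assume p: "p \<in> sector \<phi>"
    hence p0: "p \<noteq> 0" and a: "\<bar>Arg p\<bar> < \<phi>" by (auto simp: sector_def)
    have "p \<notin> \<real>\<^sub>\<le>\<^sub>0"
    proof
      assume "p \<in> \<real>\<^sub>\<le>\<^sub>0"
      then obtain r where "p = of_real r" "r \<le> 0" by (auto elim: nonpos_Reals_cases)
      with p0 have "Arg p = pi" by simp
      with a assms show False by auto
    qed
    with a show "p \<in> (- \<real>\<^sub>\<le>\<^sub>0) \<inter> Arg -` {-\<phi><..<\<phi>}" by auto
  qed (auto simp: sector_def)
  have "continuous_on (- \<real>\<^sub>\<le>\<^sub>0) Arg"
    by (intro continuous_at_imp_continuous_on ballI continuous_at_Arg) auto
  moreover have "open (- \<real>\<^sub>\<le>\<^sub>0 :: complex set)"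
    using closed_nonpos_Reals_complex by (simp add: open_Compl)
  ultimately show ?thesis
    unfolding eq by (intro continuous_open_preimage) auto
qed

lemma of_real_mult_in_sector: "q \<in> sector \<phi> \<Longrightarrow> 0 < c \<Longrightarrow> of_real c * q \<in> sector \<phi>"
  by (auto simp: sector_def)

lemma one_in_sector: "0 < \<phi> \<Longrightarrow> 1 \<in> sector \<phi>"
  by (auto simp: sector_def)

lemma zero_notin_sector: "0 \<notin> sector \<phi>"
  by (auto simp: sector_def)

lemma zero_in_closure_sector:
  assumes "0 < \<phi>"
  shows "0 \<in> closure (sector \<phi>)"
proof -
  have "(\<lambda>n. of_real (inverse (real (Suc n))) :: complex) \<longlonglongrightarrow> of_real 0"
    by (intro tendsto_of_real LIMSEQ_inverse_real_of_nat)
  moreover have "of_real (inverse (real (Suc n))) * 1 \<in> sector \<phi>" for n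
    using assms by (intro of_real_mult_in_sector one_in_sector) auto
  ultimately show ?thesis
    unfolding closure_sequential by (metis mult.right_neutral of_real_0)
qed

lemma of_real_mult_in_closure_sector:
  assumes "0 < \<phi>" "q \<in> closure (sector \<phi>)" "0 \<le> c"
  shows "of_real c * q \<in> closure (sector \<phi>)"
proof (cases "c = 0")
  case True
  thus ?thesis using zero_in_closure_sector[OF assms(1)] by simp
next
  case False
  hence "of_real c * q \<in> (*\<^sub>R) c ` closure (sector \<phi>)"
    using assms by (auto simp: scaleR_conv_of_real)
  also have "\<dots> = closure ((*\<^sub>R) c ` sector \<phi>)"
    by (rule closure_scaleR)
  also have "\<dots> \<subseteq> closure (sector \<phi>)"
    using False assms(3) by (intro closure_mono) (auto simp: scaleR_conv_of_real intro: of_real_mult_in_sector)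
  finally show ?thesis .
qed

lemma continuous_le_on_closure_minus:
  fixes g B :: "'a::metric_space \<Rightarrow> real"
  assumes g: "continuous_on (closure S - {a}) g" and B: "continuous_on (closure S - {a}) B"
    and le: "\<And>y. y \<in> S \<Longrightarrow> g y \<le> B y" and a: "a \<notin> S"
    and x: "x \<in> closure S" "x \<noteq> a"
  shows "g x \<le> B x"
proof -
  obtain y where y: "\<And>n. y n \<in> S" "y \<longlonglongrightarrow> x"
    using x(1) unfolding closure_sequential by blast
  have y_in: "\<forall>n. y n \<in> closure S - {a}"
    using y(1) a closure_subset by fastforce
  have "(\<lambda>n. B (y n)) \<longlonglongrightarrow> B x" "(\<lambda>n. g (y n)) \<longlonglongrightarrow> g x"
    using g B y_in y(2) x unfolding continuous_on_sequentially by (auto simp: o_def)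
  thus ?thesis
    using le y(1) by (intro tendsto_le[OF trivial_limit_sequentially]) auto
qed

section \<open>Elementary estimates\<close>

lemma one_plus_powr_le_exp:
  fixes \<beta> y :: real
  assumes "1 \<le> \<beta>" "0 \<le> y"
  shows "(1 + y) powr \<beta> \<le> \<beta> powr \<beta> * exp y"
proof -
  have "(1 + y) / \<beta> \<le> 1 + y / \<beta>"
    using assms by (simp add: field_simps)
  also have "\<dots> \<le> exp (y / \<beta>)"
    by (rule exp_ge_add_one_self)
  finally have "((1 + y) / \<beta>) powr \<beta> \<le> exp (y / \<beta>) powr \<beta>"
    using assms by (intro powr_mono2) auto
  also have "exp (y / \<beta>) powr \<beta> = exp y"
    using assms by (simp add: powr_def)
  finally show ?thesis
    using assms by (simp add: powr_divide field_simps)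
qed

definition decay_const :: "real \<Rightarrow> real" where
  "decay_const \<alpha> = (\<alpha> + 1) powr (\<alpha> + 1)"

definition tail_const :: "real \<Rightarrow> real" where
  "tail_const \<alpha> = 2 powr (\<alpha> + 2) * (\<alpha> + 2) powr (\<alpha> + 2)"

definition conv_const :: "real \<Rightarrow> real" where
  "conv_const \<alpha> = (4 * decay_const \<alpha> + tail_const \<alpha>) / \<alpha>"

lemma decay_const_pos: "0 < \<alpha> \<Longrightarrow> 0 < decay_const \<alpha>"
  by (simp add: decay_const_def)

lemma tail_const_pos: "0 < \<alpha> \<Longrightarrow> 0 < tail_const \<alpha>"
  by (simp add: tail_const_def)

lemma conv_const_pos: "0 < \<alpha> \<Longrightarrow> 0 < conv_const \<alpha>"
  using decay_const_pos[of \<alpha>] tail_const_pos[of \<alpha>] by (simp add: conv_const_def)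

lemma exp_neg_le_decay_const:
  fixes \<alpha> x :: real
  assumes "0 < \<alpha>" "0 \<le> x"
  shows "exp (- x) \<le> decay_const \<alpha> * (1 + x) powr (- (\<alpha> + 1))"
proof -
  have "(1 + x) powr (\<alpha> + 1) \<le> decay_const \<alpha> * exp x"
    unfolding decay_const_def using assms by (intro one_plus_powr_le_exp) auto
  hence "exp (- x) * (1 + x) powr (\<alpha> + 1) \<le> decay_const \<alpha>"
    by (simp add: exp_minus field_simps)
  moreover have "0 < (1 + x) powr (\<alpha> + 1)"
    using assms by simp
  ultimately have "exp (- x) \<le> decay_const \<alpha> / (1 + x) powr (\<alpha> + 1)"
    by (simp add: le_divide_eq)
  thus ?thesis
    by (simp only: powr_minus divide_inverse)
qed

lemma weight_mult_exp_le_tail_const: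
  fixes \<alpha> x :: real
  assumes "0 < \<alpha>" "0 \<le> x"
  shows "(1 + x\<^sup>2) * x powr \<alpha> * exp (- x / 2) \<le> tail_const \<alpha>"
proof -
  have "(1 + x\<^sup>2) * x powr \<alpha> \<le> (1 + x) powr 2 * (1 + x) powr \<alpha>"
    using assms by (intro mult_mono powr_mono2) (auto simp: power2_eq_square algebra_simps)
  also have "\<dots> = (1 + x) powr (\<alpha> + 2)"
    using assms by (simp add: powr_add)
  also have "\<dots> \<le> (2 * (1 + x / 2)) powr (\<alpha> + 2)"
    using assms by (intro powr_mono2) auto
  also have "\<dots> = 2 powr (\<alpha> + 2) * (1 + x / 2) powr (\<alpha> + 2)"
    using assms powr_mult[of 2 "1 + x / 2" "\<alpha> + 2"] by simp
  also have "\<dots> \<le> 2 powr (\<alpha> + 2) * ((\<alpha> + 2) powr (\<alpha> + 2) * exp (x / 2))"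
    using assms by (intro mult_left_mono one_plus_powr_le_exp) auto
  finally have "(1 + x\<^sup>2) * x powr \<alpha> \<le> tail_const \<alpha> * exp (x / 2)"
    by (simp add: tail_const_def)
  thus ?thesis
    by (simp add: exp_minus field_simps)
qed

lemma weight_quotient_exp_le_near:
  fixes \<alpha> \<mu> r u :: real
  assumes "0 < \<alpha>" "0 \<le> \<mu>" "0 \<le> r" "0 \<le> u" "u \<le> 1/2"
  shows "(1 + r\<^sup>2) / (1 + ((1 - u) * r)\<^sup>2) * exp (- (\<mu> * r * u))
           \<le> 4 * decay_const \<alpha> * (1 + \<mu> * r * u) powr (- (\<alpha> + 1))"
proof -
  have "r / 2 \<le> (1 - u) * r"
    using assms mult_right_mono[of "1/2" "1 - u" r] by simp
  hence "(r / 2)\<^sup>2 \<le> ((1 - u) * r)\<^sup>2"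
    using assms by (intro power_mono) auto
  hence "(1 + r\<^sup>2) / (1 + ((1 - u) * r)\<^sup>2) \<le> 4"
    by (simp add: divide_le_eq add_pos_nonneg power_divide)
  moreover have "exp (- (\<mu> * r * u)) \<le> decay_const \<alpha> * (1 + \<mu> * r * u) powr (- (\<alpha> + 1))"
    using assms by (intro exp_neg_le_decay_const) auto
  ultimately have "(1 + r\<^sup>2) / (1 + ((1 - u) * r)\<^sup>2) * exp (- (\<mu> * r * u))
      \<le> 4 * (decay_const \<alpha> * (1 + \<mu> * r * u) powr (- (\<alpha> + 1)))"
    by (intro mult_mono) auto
  thus ?thesis
    by (simp add: mult_ac)
qed

lemma weight_quotient_exp_le_far:
  fixes \<alpha> \<mu> r u :: real
  assumes "0 < \<alpha>" "1 \<le> \<mu>" "0 < r" "1/2 < u"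
  shows "(1 + r\<^sup>2) / (1 + ((1 - u) * r)\<^sup>2) * r powr \<alpha> * exp (- (\<mu> * r * u))
           \<le> tail_const \<alpha> * \<mu> powr (- \<alpha>)"
proof -
  define x where "x = \<mu> * r"
  have x: "0 \<le> x" "r \<le> x"
    using assms by (auto simp: x_def)
  have "(1 + r\<^sup>2) / (1 + ((1 - u) * r)\<^sup>2) \<le> 1 + r\<^sup>2"
    by (simp add: divide_le_eq add_pos_nonneg)
  also have "\<dots> \<le> 1 + x\<^sup>2"
    using x assms by (simp add: power_mono)
  finally have Q: "(1 + r\<^sup>2) / (1 + ((1 - u) * r)\<^sup>2) \<le> 1 + x\<^sup>2" .
  have E: "exp (- (\<mu> * r * u)) \<le> exp (- x / 2)"
    using assms x by (simp add: x_def mult_left_mono)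
  have "r powr \<alpha> = \<mu> powr (- \<alpha>) * x powr \<alpha>"
    using assms by (simp add: x_def powr_mult powr_minus field_simps)
  hence "(1 + r\<^sup>2) / (1 + ((1 - u) * r)\<^sup>2) * r powr \<alpha> * exp (- (\<mu> * r * u))
      = \<mu> powr (- \<alpha>) * ((1 + r\<^sup>2) / (1 + ((1 - u) * r)\<^sup>2) * x powr \<alpha> * exp (- (\<mu> * r * u)))"
    by simp
  also have "\<dots> \<le> \<mu> powr (- \<alpha>) * ((1 + x\<^sup>2) * x powr \<alpha> * exp (- x / 2))"
    using Q E by (intro mult_left_mono mult_mono mult_right_mono) auto
  also have "\<dots> \<le> \<mu> powr (- \<alpha>) * tail_const \<alpha>"
    using assms x by (intro mult_left_mono weight_mult_exp_le_tail_const) auto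
  finally show ?thesis
    by (simp add: mult.commute)
qed

lemma conv_kernel_le:
  fixes \<alpha> \<mu> r u :: real
  assumes "0 < \<alpha>" "1 \<le> \<mu>" "0 < r" "0 < u" "u \<le> 1"
  shows "(1 + r\<^sup>2) * r powr \<alpha> * u powr (\<alpha> - 1) * exp (- (\<mu> * r * u)) / (1 + ((1 - u) * r)\<^sup>2)
     \<le> 4 * decay_const \<alpha> * r powr \<alpha> * u powr (\<alpha> - 1) * (1 + \<mu> * r * u) powr (- (\<alpha> + 1))
       + tail_const \<alpha> * \<mu> powr (- \<alpha>) * u powr (\<alpha> - 1)"
    (is "?lhs \<le> ?near + ?far")
proof -
  define Q where "Q = (1 + r\<^sup>2) / (1 + ((1 - u) * r)\<^sup>2)"
  have "0 \<le> ?near" "0 \<le> ?far"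
    using assms decay_const_pos tail_const_pos by (simp_all add: less_imp_le)
  moreover have "?lhs \<le> ?near" if "u \<le> 1/2"
  proof -
    have "?lhs = Q * exp (- (\<mu> * r * u)) * (r powr \<alpha> * u powr (\<alpha> - 1))"
      by (simp add: Q_def field_simps)
    also have "\<dots> \<le> 4 * decay_const \<alpha> * (1 + \<mu> * r * u) powr (- (\<alpha> + 1)) * (r powr \<alpha> * u powr (\<alpha> - 1))"
      unfolding Q_def using assms that by (intro mult_right_mono weight_quotient_exp_le_near) auto
    finally show ?thesis
      by (simp add: mult_ac)
  qed
  moreover have "?lhs \<le> ?far" if "1/2 < u"
  proof -
    have "?lhs = Q * r powr \<alpha> * exp (- (\<mu> * r * u)) * u powr (\<alpha> - 1)"
      by (simp add: Q_def field_simps)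
    also have "\<dots> \<le> tail_const \<alpha> * \<mu> powr (- \<alpha>) * u powr (\<alpha> - 1)"
      unfolding Q_def using assms that by (intro mult_right_mono weight_quotient_exp_le_far) auto
    finally show ?thesis .
  qed
  ultimately show ?thesis
    by linarith
qed

lemma le_of_weighted_le:
  fixes x y \<nu> B :: real
  assumes "(1 + x\<^sup>2) * exp (- \<nu> * x) * y \<le> B"
  shows "y \<le> B * exp (\<nu> * x) / (1 + x\<^sup>2)"
proof -
  have "0 < (1 + x\<^sup>2) * exp (- \<nu> * x)"
    by (simp add: add_pos_nonneg)
  hence "y \<le> B / ((1 + x\<^sup>2) * exp (- \<nu> * x))"
    using assms by (simp add: le_divide_eq mult.commute)
  thus ?thesis
    by (simp add: exp_minus divide_simps)
qed

section \<open>Integrals on the unit interval\<close>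

lemma has_integral_powr_minus_one:
  fixes \<alpha> c d :: real
  assumes "0 < \<alpha>" "0 \<le> c" "c \<le> d"
  shows "((\<lambda>u. u powr (\<alpha> - 1)) has_integral (d powr \<alpha> / \<alpha> - c powr \<alpha> / \<alpha>)) {c..d}"
proof (rule fundamental_theorem_of_calculus_interior_strong[where S = "{}"])
  show "continuous_on {c..d} (\<lambda>u. u powr \<alpha> / \<alpha>)"
    using assms by (intro continuous_intros continuous_on_powr') auto
  fix x assume "x \<in> {c<..<d} - {}"
  hence "((\<lambda>u. u powr \<alpha> / \<alpha>) has_real_derivative (\<alpha> * x powr (\<alpha> - 1)) / \<alpha>) (at x)"
    using assms by (intro DERIV_cdivide has_real_derivative_powr) auto
  thus "((\<lambda>u. u powr \<alpha> / \<alpha>) has_vector_derivative x powr (\<alpha> - 1)) (at x)"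
    using assms by (simp add: has_real_derivative_iff_has_vector_derivative)
qed (use assms in auto)

lemma has_integral_powr_mult_affine_powr:
  fixes \<alpha> k :: real
  assumes "0 < \<alpha>" "0 \<le> k"
  shows "((\<lambda>u. u powr (\<alpha> - 1) * (1 + k * u) powr (- (\<alpha> + 1))) has_integral (1 + k) powr (- \<alpha>) / \<alpha>) {0..1}"
proof -
  define F where "F u = u powr \<alpha> * (1 + k * u) powr (- \<alpha>) / \<alpha>" for u :: real
  have pos: "0 < 1 + k * u" if "0 \<le> u" for u :: real
    using assms that by (simp add: add_pos_nonneg)
  have "((\<lambda>u. u powr (\<alpha> - 1) * (1 + k * u) powr (- (\<alpha> + 1))) has_integral (F 1 - F 0)) {0..1}"
  proof (rule fundamental_theorem_of_calculus_interior_strong[where S = "{}"])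
    show "continuous_on {0..1} F"
      unfolding F_def using assms pos
      by (intro continuous_intros continuous_on_powr' continuous_on_powr) (auto simp: less_imp_neq[symmetric])
    fix x :: real assume "x \<in> {0<..<1} - {}"
    hence x: "0 < x" and kx: "0 < 1 + k * x"
      using pos by auto
    have exponent: "- \<alpha> - 1 = - (\<alpha> + 1)"
      by simp
    have "(F has_real_derivative
             (\<alpha> * x powr (\<alpha> - 1) * (1 + k * x) powr (- \<alpha>)
              + (- \<alpha>) * (1 + k * x) powr (- (\<alpha> + 1)) * k * x powr \<alpha>) / \<alpha>) (at x)"
      unfolding F_def using assms x kx exponent
      by (auto intro!: derivative_eq_intros DERIV_fun_powr has_real_derivative_powr)
    moreover have "x powr \<alpha> = x * x powr (\<alpha> - 1)" "(1 + k * x) powr (- \<alpha>) = (1 + k * x) * (1 + k * x) powr (- (\<alpha> + 1))"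
      using x kx powr_mult_base[of x "\<alpha> - 1"] powr_mult_base[of "1 + k * x" "- (\<alpha> + 1)"] by simp_all
    ultimately have "(F has_real_derivative x powr (\<alpha> - 1) * (1 + k * x) powr (- (\<alpha> + 1))) (at x)"
      using assms by (simp add: field_simps)
    thus "(F has_vector_derivative x powr (\<alpha> - 1) * (1 + k * x) powr (- (\<alpha> + 1))) (at x)"
      by (simp add: has_real_derivative_iff_has_vector_derivative)
  qed auto
  moreover have "F 1 - F 0 = (1 + k) powr (- \<alpha>) / \<alpha>"
    using assms by (simp add: F_def)
  ultimately show ?thesis
    by simp
qed

lemma powr_mult_one_plus_powr_le:
  fixes \<alpha> \<mu> r :: real
  assumes "0 < \<alpha>" "0 < \<mu>" "0 < r"
  shows "r powr \<alpha> * (1 + \<mu> * r) powr (- \<alpha>) \<le> \<mu> powr (- \<alpha>)"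
proof -
  have "r powr \<alpha> * (1 + \<mu> * r) powr (- \<alpha>) \<le> r powr \<alpha> * (\<mu> * r) powr (- \<alpha>)"
    using assms by (intro mult_left_mono powr_mono2') auto
  also have "\<dots> = \<mu> powr (- \<alpha>)"
    using assms by (simp add: powr_mult powr_minus)
  finally show ?thesis .
qed

text \<open>The integral of u powr (alpha - 1) over [0, a] and [1 - a, 1].\<close>

definition truncation_error :: "real \<Rightarrow> real \<Rightarrow> real" where
  "truncation_error \<alpha> a = a powr \<alpha> / \<alpha> + (1 / \<alpha> - (1 - a) powr \<alpha> / \<alpha>)"

lemma truncation_error_nonneg: "0 < \<alpha> \<Longrightarrow> 0 \<le> a \<Longrightarrow> a \<le> 1 \<Longrightarrow> 0 \<le> truncation_error \<alpha> a"
  using powr_le1[of \<alpha> "1 - a"] by (simp add: truncation_error_def divide_right_mono)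

lemma tendsto_truncation_error: "0 < \<alpha> \<Longrightarrow> (truncation_error \<alpha> \<longlongrightarrow> 0) (at_right 0)"
proof -
  assume \<alpha>: "0 < \<alpha>"
  have "\<forall>\<^sub>F a in at_right 0. 0 \<le> (a :: real)"
    by (rule eventually_mono[OF eventually_at_right_less]) simp
  hence "((\<lambda>a. a powr \<alpha>) \<longlongrightarrow> 0) (at_right 0)"
    using \<alpha> by (rule tendsto_zero_powrI[OF tendsto_ident_at tendsto_const])
  moreover have "((\<lambda>a. (1 - a) powr \<alpha>) \<longlongrightarrow> (1 - 0) powr \<alpha>) (at_right 0)"
    by (intro tendsto_powr tendsto_intros) auto
  ultimately have "(truncation_error \<alpha> \<longlongrightarrow> 0 / \<alpha> + (1 / \<alpha> - (1 - 0) powr \<alpha> / \<alpha>)) (at_right 0)"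
    unfolding truncation_error_def[abs_def] using \<alpha>
    by (intro tendsto_add tendsto_diff tendsto_divide tendsto_const) auto
  thus ?thesis
    by simp
qed

lemma conv_majorant_integral:
  fixes \<alpha> \<mu> r A B :: real
  assumes "0 < \<alpha>" "1 \<le> \<mu>" "0 < r" "0 \<le> A"
  defines "g \<equiv> \<lambda>u. A * r powr \<alpha> * u powr (\<alpha> - 1) * (1 + \<mu> * r * u) powr (- (\<alpha> + 1))
                  + B * \<mu> powr (- \<alpha>) * u powr (\<alpha> - 1)"
  shows "g integrable_on {0..1}" and "integral {0..1} g \<le> (A + B) / \<alpha> * \<mu> powr (- \<alpha>)"
proof -
  have "(g has_integral A * r powr \<alpha> * ((1 + \<mu> * r) powr (- \<alpha>) / \<alpha>)
                        + B * \<mu> powr (- \<alpha>) * (1 powr \<alpha> / \<alpha> - 0 powr \<alpha> / \<alpha>)) {0..1}"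
    unfolding g_def mult.assoc[of _ "u powr (\<alpha> - 1)" for u] mult.assoc[of "A * r powr \<alpha>"]
    using assms by (intro has_integral_add has_integral_mult_right has_integral_powr_mult_affine_powr
        has_integral_powr_minus_one) auto
  moreover have "A * (r powr \<alpha> * (1 + \<mu> * r) powr (- \<alpha>)) / \<alpha> \<le> A * \<mu> powr (- \<alpha>) / \<alpha>"
    using assms by (intro divide_right_mono mult_left_mono powr_mult_one_plus_powr_le) auto
  ultimately show "g integrable_on {0..1}" "integral {0..1} g \<le> (A + B) / \<alpha> * \<mu> powr (- \<alpha>)"
    using assms by (auto simp: integral_unique add_divide_distrib distrib_right)
qed

section \<open>The convolution integrand\<close>

text \<open>The value at u = 0 is irrelevant for the integral; setting it to 0 avoids evaluating h
  at the vertex of the cone, where it may be singular.\<close>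

definition conv_integrand :: "(complex \<Rightarrow> complex) \<Rightarrow> (complex \<Rightarrow> complex) \<Rightarrow> complex \<Rightarrow> real \<Rightarrow> complex" where
  "conv_integrand h f p u = (if u = 0 then 0 else h (of_real u * p) * f (of_real (1 - u) * p) * p)"

definition conv_integrand_deriv :: "(complex \<Rightarrow> complex) \<Rightarrow> (complex \<Rightarrow> complex) \<Rightarrow> complex \<Rightarrow> real \<Rightarrow> complex" where
  "conv_integrand_deriv h f p u =
     (deriv h (of_real u * p) * of_real u * f (of_real (1 - u) * p)
      + deriv f (of_real (1 - u) * p) * of_real (1 - u) * h (of_real u * p)) * p
     + h (of_real u * p) * f (of_real (1 - u) * p)"

lemma conv_integrand_zero [simp]: "conv_integrand h f 0 = (\<lambda>_. 0)"
  by (simp add: conv_integrand_def fun_eq_iff)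

lemma conv_eq_integral:
  "conv H F p t = integral {0..1} (conv_integrand (\<lambda>s. H s t) (\<lambda>s. F s t) p)"
proof -
  have "conv H F p t = integral {0..1} (\<lambda>u. H (of_real u * p) t * F (p - of_real u * p) t * p)"
    unfolding conv_def contour_integral_integral by (simp add: linepath_def scaleR_conv_of_real)
  also have "\<dots> = integral {0..1} (conv_integrand (\<lambda>s. H s t) (\<lambda>s. F s t) p)"
  proof (rule integral_spike[of "{0}"])
    fix u :: real assume "u \<in> {0..1} - {0}"
    thus "conv_integrand (\<lambda>s. H s t) (\<lambda>s. F s t) p u = H (of_real u * p) t * F (p - of_real u * p) t * p"
      by (simp add: conv_integrand_def algebra_simps)
  qed auto
  finally show ?thesis .
qed

lemma absconv_eq_integral:
  "absconv H F p t = integral {0..1} (\<lambda>u. cmod (conv_integrand (\<lambda>s. H s t) (\<lambda>s. F s t) p u))"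
proof (cases "p = 0")
  case True
  thus ?thesis by (simp add: absconv_def)
next
  case False
  define r where "r = cmod p"
  define A where "A = (\<lambda>s. cmod (H (of_real s * sgn p) t) * cmod (F (p - of_real s * sgn p) t))"
  have r: "0 < r" "of_real r * sgn p = p"
    using False by (simp_all add: r_def sgn_div_norm scaleR_conv_of_real)
  have "absconv H F p t = integral {0..r} A"
    by (simp add: absconv_def A_def r_def)
  also have "\<dots> = r * integral {0..1} (\<lambda>u. A (r * u))"
    using integral_stretch_real[where m = r and f = A and a = 0 and b = r] r by simp
  also have "\<dots> = integral {0..1} (\<lambda>u. r * A (r * u))"
    by simp
  also have "\<dots> = integral {0..1} (\<lambda>u. cmod (conv_integrand (\<lambda>s. H s t) (\<lambda>s. F s t) p u))"
  proof (rule integral_spike[of "{0}"])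
    fix u :: real assume "u \<in> {0..1} - {0}"
    hence "u \<noteq> 0" by auto
    have e1: "of_real (r * u) * sgn p = of_real u * p"
      using r(2) by (simp add: mult_ac)
    have e2: "p - of_real u * p = of_real (1 - u) * p"
      by (simp add: algebra_simps)
    show "cmod (conv_integrand (\<lambda>s. H s t) (\<lambda>s. F s t) p u) = r * A (r * u)"
      unfolding A_def e1 e2 using \<open>u \<noteq> 0\<close> by (simp add: conv_integrand_def norm_mult r_def mult_ac)
  qed auto
  finally show ?thesis .
qed

lemma eventually_at_right_zero_half: "\<forall>\<^sub>F a in at_right 0. 0 < a \<and> a \<le> (1/2 :: real)"
  unfolding eventually_at_right[OF zero_less_one] by (intro exI[of _ "1/2"]) auto

locale cone_convolution =
  fixes S :: "complex set" and h f :: "complex \<Rightarrow> complex" and C \<alpha> \<rho> :: real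
  assumes open_S: "open S"
    and cone_S: "\<And>c q. 0 < c \<Longrightarrow> q \<in> S \<Longrightarrow> of_real c * q \<in> S"
    and cone_closure_S: "\<And>c q. 0 \<le> c \<Longrightarrow> q \<in> closure S \<Longrightarrow> of_real c * q \<in> closure S"
    and holomorphic_h: "h holomorphic_on S"
    and continuous_h: "continuous_on (closure S - {0}) h"
    and norm_h_le: "\<And>q. q \<in> closure S \<Longrightarrow> q \<noteq> 0 \<Longrightarrow> cmod (h q) \<le> C * cmod q powr (\<alpha> - 1) * exp (\<rho> * cmod q)"
    and holomorphic_f: "f holomorphic_on S"
    and continuous_f: "continuous_on (closure S) f"
    and C_nonneg: "0 \<le> C" and \<alpha>_pos: "0 < \<alpha>" and \<rho>_nonneg: "0 \<le> \<rho>"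
begin

lemma f_bounded_on_cball: "\<exists>M\<ge>0. \<forall>q\<in>closure S. cmod q \<le> b \<longrightarrow> cmod (f q) \<le> M"
proof -
  have "compact (f ` (cball 0 b \<inter> closure S))"
    by (intro compact_continuous_image continuous_on_subset[OF continuous_f] compact_Int_closed) auto
  hence "bounded (f ` (cball 0 b \<inter> closure S))"
    by (rule compact_imp_bounded)
  then obtain M where "\<forall>y\<in>f ` (cball 0 b \<inter> closure S). norm y \<le> M"
    unfolding bounded_iff by blast
  thus ?thesis
    by (intro exI[of _ "max M 0"]) (auto simp: le_max_iff_disj)
qed

lemma norm_conv_integrand_le:
  assumes p: "p \<in> closure S" "cmod p \<le> b" and u: "u \<in> {0..1}"
    and M: "0 \<le> M" "\<forall>q\<in>closure S. cmod q \<le> b \<longrightarrow> cmod (f q) \<le> M"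
  shows "cmod (conv_integrand h f p u) \<le> C * exp (\<rho> * b) * M * cmod p powr \<alpha> * u powr (\<alpha> - 1)"
proof (cases "u = 0 \<or> p = 0")
  case True
  thus ?thesis using C_nonneg M by (auto simp: conv_integrand_def)
next
  case False
  hence u0: "0 < u" and p0: "p \<noteq> 0"
    using u by auto
  define r where "r = cmod p"
  have r0: "0 < r"
    using p0 by (simp add: r_def)
  have "u * r \<le> 1 * r"
    by (rule mult_right_mono) (use u r0 in auto)
  hence ur: "0 \<le> u * r" "u * r \<le> b"
    using u0 r0 p(2) unfolding r_def mult_1 by (simp, linarith)
  have "cmod (h (of_real u * p)) \<le> C * (u * r) powr (\<alpha> - 1) * exp (\<rho> * (u * r))"
    using norm_h_le[of "of_real u * p"] cone_closure_S[of u p] u0 p p0 by (simp add: norm_mult r_def)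
  also have "\<dots> \<le> C * (u * r) powr (\<alpha> - 1) * exp (\<rho> * b)"
    using ur C_nonneg \<rho>_nonneg mult_left_mono[of "u * r" b \<rho>] by (intro mult_left_mono) auto
  finally have h: "cmod (h (of_real u * p)) \<le> C * (u * r) powr (\<alpha> - 1) * exp (\<rho> * b)" .
  have "cmod (of_real (1 - u) * p) = (1 - u) * r"
    using u by (simp only: norm_mult norm_of_real r_def) simp
  also have "\<dots> \<le> b"
    using ur p(2) unfolding r_def left_diff_distrib mult_1 by linarith
  finally have "cmod (of_real (1 - u) * p) \<le> b" .
  moreover have "of_real (1 - u) * p \<in> closure S"
    using u p(1) by (intro cone_closure_S) auto
  ultimately have f: "cmod (f (of_real (1 - u) * p)) \<le> M"
    using M(2) by blast
  have "cmod (conv_integrand h f p u) = cmod (h (of_real u * p)) * cmod (f (of_real (1 - u) * p)) * r"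
    using u0 by (simp add: conv_integrand_def norm_mult r_def)
  also have "\<dots> \<le> C * (u * r) powr (\<alpha> - 1) * exp (\<rho> * b) * M * r"
    using h f r0 C_nonneg by (intro mult_right_mono mult_mono) auto
  also have "\<dots> = C * exp (\<rho> * b) * M * (r * r powr (\<alpha> - 1)) * u powr (\<alpha> - 1)"
    using u0 r0 by (simp add: powr_mult)
  also have "r * r powr (\<alpha> - 1) = r powr \<alpha>"
    using r0 powr_mult_base[of r "\<alpha> - 1"] by simp
  finally show ?thesis
    by (simp add: r_def)
qed

lemma continuous_on_conv_integrand:
  assumes U: "U \<subseteq> closure S - {0}" and I: "I \<subseteq> {0<..1}"
  shows "continuous_on (U \<times> I) (\<lambda>z. conv_integrand h f (fst z) (snd z))"
proof -
  have pu: "p \<in> closure S" "p \<noteq> 0" "0 < u" "u \<le> 1" if "p \<in> U" "u \<in> I" for p u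
    using that U I by auto
  have "of_real u * p \<in> closure S - {0}" if "p \<in> U" "u \<in> I" for p u
    using pu[OF that] cone_closure_S[of u p] by simp
  moreover have "of_real (1 - u) * p \<in> closure S" if "p \<in> U" "u \<in> I" for p u
    using pu[OF that] cone_closure_S[of "1 - u" p] by simp
  ultimately have "continuous_on (U \<times> I) (\<lambda>z. h (of_real (snd z) * fst z))"
    and "continuous_on (U \<times> I) (\<lambda>z. f (of_real (1 - snd z) * fst z))"
    by (auto intro!: continuous_on_compose2[OF continuous_h] continuous_on_compose2[OF continuous_f]
        continuous_intros)
  hence "continuous_on (U \<times> I) (\<lambda>z. h (of_real (snd z) * fst z) * f (of_real (1 - snd z) * fst z) * fst z)"
    by (intro continuous_intros)
  thus ?thesis
    by (rule continuous_on_eq) (use I in \<open>auto simp: conv_integrand_def\<close>)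
qed

lemma continuous_on_conv_integrand_segment:
  assumes "p \<in> closure S"
  shows "continuous_on {0<..1} (conv_integrand h f p)"
proof (cases "p = 0")
  case True
  thus ?thesis
    by simp
next
  case False
  have "continuous_on ({p} \<times> {0<..1}) (\<lambda>z. conv_integrand h f (fst z) (snd z))"
    using assms False by (intro continuous_on_conv_integrand) auto
  moreover have "continuous_on {0<..1} (\<lambda>u::real. (p, u))"
    by (intro continuous_intros)
  ultimately have "continuous_on {0<..1} (\<lambda>u. conv_integrand h f (fst (p, u)) (snd (p, u)))"
    by (rule continuous_on_compose2) auto
  thus ?thesis
    by simp
qed

lemma conv_integrand_absolutely_integrable:
  assumes p: "p \<in> closure S"
  shows "conv_integrand h f p absolutely_integrable_on {0..1}"
proof -
  obtain M where M: "0 \<le> M" "\<forall>q\<in>closure S. cmod q \<le> cmod p \<longrightarrow> cmod (f q) \<le> M"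
    using f_bounded_on_cball[of "cmod p"] by auto
  define D where "D = C * exp (\<rho> * cmod p) * M * cmod p powr \<alpha>"
  have null: "negligible ({0..1} - {0<..1::real} \<union> ({0<..1} - {0..1}))"
    by (rule negligible_subset[of "{0}"]) auto
  have Ioc: "{0<..1::real} \<in> sets lebesgue"
    by (rule sets_completionI_sets) (simp add: greaterThanAtMost_borel)
  have "conv_integrand h f p absolutely_integrable_on {0<..1}"
  proof (rule measurable_bounded_by_integrable_imp_absolutely_integrable)
    show "conv_integrand h f p \<in> borel_measurable (lebesgue_on {0<..1})"
      by (rule continuous_imp_measurable_on_sets_lebesgue[OF continuous_on_conv_integrand_segment[OF p] Ioc])
    show "{0<..1::real} \<in> sets lebesgue"
      by (rule Ioc)
    have "(\<lambda>u. u powr (\<alpha> - 1)) integrable_on {0..1}"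
      using has_integral_powr_minus_one[OF \<alpha>_pos order_refl zero_le_one] by blast
    hence "(\<lambda>u. D * u powr (\<alpha> - 1)) integrable_on {0..1}"
      by (rule integrable_on_mult_right)
    thus "(\<lambda>u. D * u powr (\<alpha> - 1)) integrable_on {0<..1}"
      by (rule integrable_spike_set_eq[OF null, THEN iffD1])
    show "norm (conv_integrand h f p u) \<le> D * u powr (\<alpha> - 1)" if "u \<in> {0<..1}" for u
      unfolding D_def using that by (intro norm_conv_integrand_le[OF p order_refl _ M]) auto
  qed
  thus ?thesis
    by (simp add: absolutely_integrable_on_def integrable_spike_set_eq[OF null])
qed

lemma integrable_conv_integrand: "p \<in> closure S \<Longrightarrow> conv_integrand h f p integrable_on {0..1}"
  using conv_integrand_absolutely_integrable by (simp add: absolutely_integrable_on_def)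

lemma norm_integral_conv_integrand_le_integral_norm:
  assumes "p \<in> closure S"
  shows "cmod (integral {0..1} (conv_integrand h f p)) \<le> integral {0..1} (\<lambda>u. cmod (conv_integrand h f p u))"
    and "0 \<le> integral {0..1} (\<lambda>u. cmod (conv_integrand h f p u))"
  using conv_integrand_absolutely_integrable[OF assms] unfolding absolutely_integrable_on_def
  by (auto intro: integral_norm_bound_integral integral_nonneg)

lemma norm_integral_conv_integrand_le:
  assumes p: "p \<in> closure S" "cmod p \<le> b"
    and M: "0 \<le> M" "\<forall>q\<in>closure S. cmod q \<le> b \<longrightarrow> cmod (f q) \<le> M"
    and cd: "0 \<le> c" "c \<le> d" "d \<le> 1"
  shows "cmod (integral {c..d} (conv_integrand h f p))
           \<le> C * exp (\<rho> * b) * M * cmod p powr \<alpha> * (d powr \<alpha> / \<alpha> - c powr \<alpha> / \<alpha>)"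
proof -
  define D where "D = C * exp (\<rho> * b) * M * cmod p powr \<alpha>"
  have D: "((\<lambda>u. D * u powr (\<alpha> - 1)) has_integral D * (d powr \<alpha> / \<alpha> - c powr \<alpha> / \<alpha>)) {c..d}"
    using cd by (intro has_integral_mult_right has_integral_powr_minus_one \<alpha>_pos)
  have "cmod (integral {c..d} (conv_integrand h f p)) \<le> integral {c..d} (\<lambda>u. D * u powr (\<alpha> - 1))"
  proof (rule integral_norm_bound_integral)
    show "conv_integrand h f p integrable_on {c..d}"
      by (rule integrable_on_subinterval[OF integrable_conv_integrand[OF p(1)]]) (use cd in auto)
    show "(\<lambda>u. D * u powr (\<alpha> - 1)) integrable_on {c..d}"
      using D by blast
    show "norm (conv_integrand h f p u) \<le> D * u powr (\<alpha> - 1)" if "u \<in> {c..d}" for u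
      unfolding D_def using that cd by (intro norm_conv_integrand_le p M) auto
  qed
  also have "\<dots> = D * (d powr \<alpha> / \<alpha> - c powr \<alpha> / \<alpha>)"
    using D by (rule integral_unique)
  finally show ?thesis
    by (simp add: D_def)
qed

lemma norm_integral_minus_truncated_le:
  assumes p: "p \<in> closure S" "cmod p \<le> b"
    and M: "0 \<le> M" "\<forall>q\<in>closure S. cmod q \<le> b \<longrightarrow> cmod (f q) \<le> M"
    and a: "0 < a" "a \<le> 1/2"
  shows "cmod (integral {0..1} (conv_integrand h f p) - integral {a..1-a} (conv_integrand h f p))
           \<le> C * exp (\<rho> * b) * M * cmod p powr \<alpha> * truncation_error \<alpha> a"
proof -
  define g where "g = conv_integrand h f p"
  define D where "D = C * exp (\<rho> * b) * M * cmod p powr \<alpha>"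
  have g: "g integrable_on {0..1}" "g integrable_on {a..1}"
    using integrable_conv_integrand[OF p(1)] a by (auto simp: g_def intro: integrable_on_subinterval)
  have "integral {0..a} g + integral {a..1} g = integral {0..1} g"
    "integral {a..1-a} g + integral {1-a..1} g = integral {a..1} g"
    using g a by (auto intro: Henstock_Kurzweil_Integration.integral_combine)
  hence "integral {0..1} g - integral {a..1-a} g = integral {0..a} g + integral {1-a..1} g"
    by (simp add: algebra_simps)
  hence "cmod (integral {0..1} g - integral {a..1-a} g) \<le> cmod (integral {0..a} g) + cmod (integral {1-a..1} g)"
    by (simp add: norm_triangle_ineq)
  also have "\<dots> \<le> D * (a powr \<alpha> / \<alpha> - 0 powr \<alpha> / \<alpha>) + D * (1 powr \<alpha> / \<alpha> - (1 - a) powr \<alpha> / \<alpha>)"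
    unfolding g_def D_def using a by (intro add_mono norm_integral_conv_integrand_le p M) auto
  finally show ?thesis
    by (simp add: g_def D_def truncation_error_def algebra_simps)
qed

lemma uniform_limit_truncated_integral:
  assumes W: "W \<subseteq> closure S" "\<And>p. p \<in> W \<Longrightarrow> cmod p \<le> b"
  shows "uniform_limit W (\<lambda>a p. integral {a..1-a} (conv_integrand h f p))
           (\<lambda>p. integral {0..1} (conv_integrand h f p)) (at_right 0)"
proof (rule uniform_limitI)
  fix e :: real assume e: "0 < e"
  obtain M where M: "0 \<le> M" "\<forall>q\<in>closure S. cmod q \<le> b \<longrightarrow> cmod (f q) \<le> M"
    using f_bounded_on_cball[of b] by auto
  define D where "D = C * exp (\<rho> * b) * M * b powr \<alpha>"
  have "((\<lambda>a. D * truncation_error \<alpha> a) \<longlongrightarrow> D * 0) (at_right 0)"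
    using \<alpha>_pos by (intro tendsto_mult tendsto_const tendsto_truncation_error)
  hence "\<forall>\<^sub>F a in at_right 0. D * truncation_error \<alpha> a < e"
    using e by (intro order_tendstoD(2)) auto
  with eventually_at_right_zero_half
  show "\<forall>\<^sub>F a in at_right 0. \<forall>p\<in>W.
      dist (integral {a..1-a} (conv_integrand h f p)) (integral {0..1} (conv_integrand h f p)) < e"
  proof eventually_elim
    case (elim a)
    show ?case
    proof
      fix p assume p: "p \<in> W"
      have "cmod p powr \<alpha> \<le> b powr \<alpha>"
        using p W \<alpha>_pos by (intro powr_mono2) auto
      hence "C * exp (\<rho> * b) * M * cmod p powr \<alpha> * truncation_error \<alpha> a \<le> D * truncation_error \<alpha> a"
        using C_nonneg M elim \<alpha>_pos truncation_error_nonneg[of \<alpha> a]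
        by (simp add: D_def mult_left_mono mult_right_mono)
      moreover have "cmod (integral {0..1} (conv_integrand h f p) - integral {a..1-a} (conv_integrand h f p))
          \<le> C * exp (\<rho> * b) * M * cmod p powr \<alpha> * truncation_error \<alpha> a"
        using p W M elim by (intro norm_integral_minus_truncated_le) auto
      ultimately show "dist (integral {a..1-a} (conv_integrand h f p)) (integral {0..1} (conv_integrand h f p)) < e"
        using elim by (simp add: dist_norm norm_minus_commute)
    qed
  qed
qed

lemma continuous_on_truncated_integral:
  assumes "0 < a" "a \<le> 1 - a" "U \<subseteq> closure S - {0}"
  shows "continuous_on U (\<lambda>p. integral {a..1-a} (conv_integrand h f p))"
proof -
  have "{a..1-a} \<subseteq> {0<..1}"
    using assms by auto
  hence "continuous_on (U \<times> cbox a (1-a)) (\<lambda>(p, u). conv_integrand h f p u)"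
    using continuous_on_conv_integrand[OF assms(3)] by (simp add: case_prod_unfold cbox_interval)
  hence "continuous_on U (\<lambda>p. integral (cbox a (1-a)) (conv_integrand h f p))"
    by (rule integral_continuous_on_param)
  thus ?thesis
    by (simp add: cbox_interval)
qed

lemma has_field_derivative_conv_integrand:
  assumes "p \<in> S" "0 < u" "u < 1"
  shows "((\<lambda>p. conv_integrand h f p u) has_field_derivative conv_integrand_deriv h f p u) (at p)"
proof -
  have "((\<lambda>p. h (of_real u * p)) has_field_derivative deriv h (of_real u * p) * of_real u) (at p)"
    using assms cone_S[of u p]
    by (intro DERIV_chain2[OF holomorphic_derivI[OF holomorphic_h open_S]]) (auto intro!: derivative_eq_intros)
  moreover have "((\<lambda>p. f (of_real (1 - u) * p)) has_field_derivative deriv f (of_real (1 - u) * p) * of_real (1 - u)) (at p)"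
    using assms cone_S[of "1 - u" p]
    by (intro DERIV_chain2[OF holomorphic_derivI[OF holomorphic_f open_S]]) (auto intro!: derivative_eq_intros)
  ultimately have "((\<lambda>p. h (of_real u * p) * f (of_real (1 - u) * p) * p) has_field_derivative conv_integrand_deriv h f p u) (at p)"
    unfolding conv_integrand_deriv_def by (auto intro!: derivative_eq_intros simp: algebra_simps)
  moreover have "(\<lambda>p. conv_integrand h f p u) = (\<lambda>p. h (of_real u * p) * f (of_real (1 - u) * p) * p)"
    using assms by (simp add: conv_integrand_def)
  ultimately show ?thesis
    by simp
qed

lemma continuous_on_conv_integrand_deriv:
  assumes "V \<subseteq> S" "0 < a" "a \<le> 1 - a"
  shows "continuous_on (V \<times> {a..1-a}) (\<lambda>(p, u). conv_integrand_deriv h f p u)"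
proof -
  have "of_real u * p \<in> S" "of_real (1 - u) * p \<in> S" if "p \<in> V" "u \<in> {a..1-a}" for p u
    using that assms by (intro cone_S; auto)+
  hence in_S: "(\<lambda>z. of_real (snd z) * fst z) ` (V \<times> {a..1-a}) \<subseteq> S"
    "(\<lambda>z. of_real (1 - snd z) * fst z) ` (V \<times> {a..1-a}) \<subseteq> S"
    by auto
  have cont: "continuous_on S h" "continuous_on S f" "continuous_on S (deriv h)" "continuous_on S (deriv f)"
    using holomorphic_h holomorphic_f open_S
    by (auto intro!: holomorphic_on_imp_continuous_on holomorphic_deriv)
  show ?thesis
    unfolding conv_integrand_deriv_def case_prod_unfold
    by (intro continuous_intros continuous_on_compose2[OF cont(1) _ in_S(1)]
        continuous_on_compose2[OF cont(2) _ in_S(2)] continuous_on_compose2[OF cont(3) _ in_S(1)]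
        continuous_on_compose2[OF cont(4) _ in_S(2)])
qed

lemma holomorphic_on_truncated_integral:
  assumes a: "0 < a" "a \<le> 1 - a" and V: "convex V" "V \<subseteq> S"
  shows "(\<lambda>p. integral {a..1-a} (conv_integrand h f p)) holomorphic_on V"
  unfolding holomorphic_on_def field_differentiable_def
proof
  fix p assume "p \<in> V"
  have "((\<lambda>p. integral (cbox a (1-a)) (conv_integrand h f p)) has_field_derivative
          integral (cbox a (1-a)) (conv_integrand_deriv h f p)) (at p within V)"
  proof (rule leibniz_rule_field_derivative)
    show "((\<lambda>q. conv_integrand h f q u) has_field_derivative conv_integrand_deriv h f q u) (at q within V)"
      if "q \<in> V" "u \<in> cbox a (1-a)" for q u
      using that a V
      by (intro has_field_derivative_at_within[OF has_field_derivative_conv_integrand]) auto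
    show "conv_integrand h f q integrable_on cbox a (1-a)" if "q \<in> V" for q
      using that a V closure_subset
      by (auto intro!: integrable_on_subinterval[OF integrable_conv_integrand])
    show "continuous_on (V \<times> cbox a (1-a)) (\<lambda>(q, u). conv_integrand_deriv h f q u)"
      using continuous_on_conv_integrand_deriv[OF V(2) a] by simp
  qed (use \<open>p \<in> V\<close> V in auto)
  thus "\<exists>D. ((\<lambda>p. integral {a..1-a} (conv_integrand h f p)) has_field_derivative D) (at p within V)"
    by auto
qed

lemma holomorphic_on_integral_conv_integrand:
  "(\<lambda>p. integral {0..1} (conv_integrand h f p)) holomorphic_on S"
  unfolding holomorphic_on_def
proof
  fix z assume "z \<in> S"
  then obtain e where e: "0 < e" "ball z e \<subseteq> S"
    using open_S open_contains_ball by blast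
  define r where "r = e / 2"
  have r: "0 < r" "cball z r \<subseteq> ball z e"
    using e by (auto simp: r_def)
  have "\<forall>\<^sub>F a in at_right 0. continuous_on (cball z r) (\<lambda>p. integral {a..1-a} (conv_integrand h f p))
           \<and> (\<lambda>p. integral {a..1-a} (conv_integrand h f p)) holomorphic_on ball z r"
    using eventually_at_right_zero_half
  proof eventually_elim
    case (elim a)
    hence "(\<lambda>p. integral {a..1-a} (conv_integrand h f p)) holomorphic_on ball z e"
      using e by (intro holomorphic_on_truncated_integral) auto
    thus ?case
      using r by (meson holomorphic_on_imp_continuous_on holomorphic_on_subset continuous_on_subset
          ball_subset_cball subset_trans)
  qed
  moreover have "uniform_limit (cball z r) (\<lambda>a p. integral {a..1-a} (conv_integrand h f p))
                   (\<lambda>p. integral {0..1} (conv_integrand h f p)) (at_right 0)"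
  proof (rule uniform_limit_truncated_integral)
    show "cball z r \<subseteq> closure S"
      using r e closure_subset by blast
    show "cmod p \<le> cmod z + r" if "p \<in> cball z r" for p
      using that norm_triangle_sub[of p z] by (auto simp: dist_norm norm_minus_commute)
  qed
  ultimately have "(\<lambda>p. integral {0..1} (conv_integrand h f p)) holomorphic_on ball z r"
    by (rule holomorphic_uniform_limit[OF _ _ trivial_limit_at_right_real]) auto
  hence "(\<lambda>p. integral {0..1} (conv_integrand h f p)) field_differentiable (at z)"
    using r by (intro holomorphic_on_imp_differentiable_at) auto
  thus "(\<lambda>p. integral {0..1} (conv_integrand h f p)) field_differentiable (at z within S)"
    by (rule field_differentiable_at_within)
qed

lemma integral_conv_integrand_tendsto_zero:
  "((\<lambda>p. integral {0..1} (conv_integrand h f p)) \<longlongrightarrow> 0) (at 0 within closure S)"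
proof -
  obtain M where M: "0 \<le> M" "\<forall>q\<in>closure S. cmod q \<le> 1 \<longrightarrow> cmod (f q) \<le> M"
    using f_bounded_on_cball[of 1] by auto
  define D where "D = C * exp (\<rho> * 1) * M"
  have "norm (integral {0..1} (conv_integrand h f p)) \<le> D * cmod p powr \<alpha> * (1 powr \<alpha> / \<alpha> - 0 powr \<alpha> / \<alpha>)"
    if "p \<in> closure S" "cmod p \<le> 1" for p
    unfolding D_def using that by (intro norm_integral_conv_integrand_le M) auto
  hence "\<forall>\<^sub>F p in at 0 within closure S.
           norm (integral {0..1} (conv_integrand h f p)) \<le> D * cmod p powr \<alpha> * (1 powr \<alpha> / \<alpha> - 0 powr \<alpha> / \<alpha>)"
    unfolding eventually_at by (intro exI[of _ 1]) (auto simp: dist_norm)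
  moreover have "((\<lambda>p. cmod p) \<longlongrightarrow> 0) (at 0 within closure S)"
    using tendsto_norm_zero[OF tendsto_ident_at[of "0::complex" "closure S"]] .
  hence "((\<lambda>p. cmod p powr \<alpha>) \<longlongrightarrow> 0) (at 0 within closure S)"
    by (rule tendsto_zero_powrI[OF _ tendsto_const]) (simp_all add: \<alpha>_pos)
  hence "((\<lambda>p. D * cmod p powr \<alpha>) \<longlongrightarrow> 0) (at 0 within closure S)"
    by (rule tendsto_mult_right_zero)
  hence "((\<lambda>p. D * cmod p powr \<alpha> * (1 powr \<alpha> / \<alpha> - 0 powr \<alpha> / \<alpha>)) \<longlongrightarrow> 0) (at 0 within closure S)"
    by (rule tendsto_mult_left_zero)
  ultimately show ?thesis
    by (rule Lim_null_comparison)
qed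

lemma continuous_on_integral_conv_integrand_off_zero:
  assumes "V \<subseteq> closure S - {0}" "\<And>p. p \<in> V \<Longrightarrow> cmod p \<le> b"
  shows "continuous_on V (\<lambda>p. integral {0..1} (conv_integrand h f p))"
proof (rule uniform_limit_theorem)
  show "\<forall>\<^sub>F a in at_right 0. continuous_on V (\<lambda>p. integral {a..1-a} (conv_integrand h f p))"
    using eventually_at_right_zero_half
    by eventually_elim (use assms in \<open>auto intro: continuous_on_truncated_integral\<close>)
  show "uniform_limit V (\<lambda>a p. integral {a..1-a} (conv_integrand h f p))
          (\<lambda>p. integral {0..1} (conv_integrand h f p)) (at_right 0)"
    using assms by (intro uniform_limit_truncated_integral) auto
qed simp

lemma continuous_on_integral_conv_integrand:
  "continuous_on (closure S) (\<lambda>p. integral {0..1} (conv_integrand h f p))"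
  unfolding continuous_on_eq_continuous_within
proof
  fix p0 assume p0: "p0 \<in> closure S"
  show "continuous (at p0 within closure S) (\<lambda>p. integral {0..1} (conv_integrand h f p))"
  proof (cases "p0 = 0")
    case True
    thus ?thesis
      using integral_conv_integrand_tendsto_zero by (simp add: continuous_within)
  next
    case False
    define r where "r = cmod p0 / 2"
    define V where "V = closure S \<inter> cball p0 r"
    have r: "0 < r"
      using False by (simp add: r_def)
    have "cmod p \<le> cmod p0 + r" "0 < cmod p" if "p \<in> V" for p
      using that False norm_triangle_sub[of p p0] norm_triangle_sub[of p0 p]
      by (auto simp: V_def r_def dist_norm norm_minus_commute)
    hence "continuous_on V (\<lambda>p. integral {0..1} (conv_integrand h f p))"
      by (intro continuous_on_integral_conv_integrand_off_zero[where b = "cmod p0 + r"])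
        (use False in \<open>auto simp: V_def r_def\<close>)
    moreover have "at p0 within closure S = at p0 within V"
      unfolding V_def using r by (intro at_within_nhd[of p0 "ball p0 r"]) auto
    ultimately show ?thesis
      using p0 r by (simp add: continuous_on_eq_continuous_within V_def)
  qed
qed

lemma weighted_norm_conv_integrand_le:
  assumes p: "p \<in> closure S" "p \<noteq> 0" and u: "0 < u" "u \<le> 1" and \<nu>: "1 \<le> \<nu> - \<rho>"
    and SF: "\<forall>q\<in>closure S. (1 + (cmod q)\<^sup>2) * exp (- \<nu> * cmod q) * cmod (f q) \<le> SF"
  shows "(1 + (cmod p)\<^sup>2) * exp (- \<nu> * cmod p) * cmod (conv_integrand h f p u)
           \<le> C * SF * (4 * decay_const \<alpha> * cmod p powr \<alpha> * u powr (\<alpha> - 1) * (1 + (\<nu> - \<rho>) * cmod p * u) powr (- (\<alpha> + 1))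
                        + tail_const \<alpha> * (\<nu> - \<rho>) powr (- \<alpha>) * u powr (\<alpha> - 1))"
proof -
  define r where "r = cmod p"
  define q where "q = of_real (1 - u) * p"
  have r: "0 < r"
    using p by (simp add: r_def)
  have "0 \<le> SF"
    by (rule order_trans[OF _ SF[rule_format, OF p(1)]]) simp
  hence CSF: "0 \<le> C * SF"
    using C_nonneg by simp
  have h: "cmod (h (of_real u * p)) \<le> C * (u powr (\<alpha> - 1) * r powr (\<alpha> - 1)) * exp (\<rho> * (u * r))"
    using norm_h_le[of "of_real u * p"] cone_closure_S[of u p] u p by (simp add: norm_mult r_def powr_mult)
  have nq: "cmod q = (1 - u) * r"
    using u by (simp only: q_def norm_mult norm_of_real r_def; simp)
  have "q \<in> closure S"
    unfolding q_def using u p by (intro cone_closure_S) auto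
  hence f: "cmod (f q) \<le> SF * exp (\<nu> * ((1 - u) * r)) / (1 + ((1 - u) * r)\<^sup>2)"
    using SF nq by (intro le_of_weighted_le) metis
  have "(1 + r\<^sup>2) * exp (- \<nu> * r) * cmod (conv_integrand h f p u)
      = (1 + r\<^sup>2) * exp (- \<nu> * r) * (cmod (h (of_real u * p)) * cmod (f q) * r)"
    using u by (simp add: conv_integrand_def q_def norm_mult r_def)
  also have "\<dots> \<le> (1 + r\<^sup>2) * exp (- \<nu> * r) * ((C * (u powr (\<alpha> - 1) * r powr (\<alpha> - 1)) * exp (\<rho> * (u * r)))
                    * (SF * exp (\<nu> * ((1 - u) * r)) / (1 + ((1 - u) * r)\<^sup>2)) * r)"
    using h f r C_nonneg by (intro mult_left_mono mult_right_mono mult_mono) auto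
  also have "\<dots> = C * SF * ((1 + r\<^sup>2) * r powr \<alpha> * u powr (\<alpha> - 1) * exp (- ((\<nu> - \<rho>) * r * u))
                                / (1 + ((1 - u) * r)\<^sup>2))"
  proof -
    have "r powr \<alpha> = r * r powr (\<alpha> - 1)"
      using r powr_mult_base[of r "\<alpha> - 1"] by simp
    moreover have "exp (- ((\<nu> - \<rho>) * r * u)) = exp (- \<nu> * r) * exp (\<rho> * (u * r)) * exp (\<nu> * ((1 - u) * r))"
      unfolding exp_add[symmetric] by (simp add: algebra_simps)
    ultimately show ?thesis
      by (simp add: field_simps)
  qed
  also have "\<dots> \<le> C * SF * (4 * decay_const \<alpha> * r powr \<alpha> * u powr (\<alpha> - 1) * (1 + (\<nu> - \<rho>) * r * u) powr (- (\<alpha> + 1))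
                             + tail_const \<alpha> * (\<nu> - \<rho>) powr (- \<alpha>) * u powr (\<alpha> - 1))"
    using r u \<nu> CSF \<alpha>_pos by (intro mult_left_mono conv_kernel_le) auto
  finally show ?thesis
    by (simp add: r_def)
qed

lemma weighted_integral_norm_conv_integrand_le:
  assumes p: "p \<in> closure S" and \<nu>: "1 \<le> \<nu> - \<rho>"
    and SF: "\<forall>q\<in>closure S. (1 + (cmod q)\<^sup>2) * exp (- \<nu> * cmod q) * cmod (f q) \<le> SF"
  shows "(1 + (cmod p)\<^sup>2) * exp (- \<nu> * cmod p) * integral {0..1} (\<lambda>u. cmod (conv_integrand h f p u))
           \<le> C * SF * (conv_const \<alpha> * (\<nu> - \<rho>) powr (- \<alpha>))"
proof -
  have "0 \<le> SF"
    by (rule order_trans[OF _ SF[rule_format, OF p(1)]]) simp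
  hence CSF: "0 \<le> C * SF * (conv_const \<alpha> * (\<nu> - \<rho>) powr (- \<alpha>))"
    using C_nonneg \<alpha>_pos conv_const_pos[of \<alpha>] by simp
  show ?thesis
  proof (cases "p = 0")
    case True
    thus ?thesis using CSF by simp
  next
    case False
    define W where "W = (1 + (cmod p)\<^sup>2) * exp (- \<nu> * cmod p)"
    define g where "g u = 4 * decay_const \<alpha> * cmod p powr \<alpha> * u powr (\<alpha> - 1) * (1 + (\<nu> - \<rho>) * cmod p * u) powr (- (\<alpha> + 1))
                          + tail_const \<alpha> * (\<nu> - \<rho>) powr (- \<alpha>) * u powr (\<alpha> - 1)" for u
    have g: "g integrable_on {0..1}" "integral {0..1} g \<le> conv_const \<alpha> * (\<nu> - \<rho>) powr (- \<alpha>)"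
      unfolding g_def conv_const_def using \<alpha>_pos \<nu> False decay_const_pos[of \<alpha>]
      by (intro conv_majorant_integral; simp)+
    have "W * cmod (conv_integrand h f p u) \<le> C * SF * g u" if "u \<in> {0..1}" for u
    proof (cases "u = 0")
      case True
      thus ?thesis
        using \<open>0 \<le> SF\<close> C_nonneg decay_const_pos[of \<alpha>] tail_const_pos[of \<alpha>] \<alpha>_pos
        by (simp add: g_def conv_integrand_def)
    next
      case False
      thus ?thesis
        using that p \<open>p \<noteq> 0\<close> \<nu> SF unfolding W_def g_def by (intro weighted_norm_conv_integrand_le) auto
    qed
    hence "W * integral {0..1} (\<lambda>u. cmod (conv_integrand h f p u)) \<le> integral {0..1} (\<lambda>u. C * SF * g u)"
      using conv_integrand_absolutely_integrable[OF p] g(1)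
      by (subst integral_mult_right[symmetric], intro integral_le integrable_on_mult_right)
         (auto simp: absolutely_integrable_on_def)
    also have "\<dots> \<le> C * SF * (conv_const \<alpha> * (\<nu> - \<rho>) powr (- \<alpha>))"
      using mult_left_mono[OF g(2), of "C * SF"] C_nonneg \<open>0 \<le> SF\<close> by simp
    finally show ?thesis
      by (simp add: W_def)
  qed
qed

end

lemma cone_convolution_sector:
  assumes \<phi>: "0 < \<phi>" "\<phi> \<le> pi" and pos: "0 \<le> C" "0 < \<alpha>" "0 \<le> \<rho>"
    and H: "in_H \<phi> T H C \<alpha> \<rho>" and F: "A_phi \<phi> T \<nu> F" and t: "t \<in> {0..T}"
  shows "cone_convolution (sector \<phi>) (\<lambda>p. H p t) (\<lambda>p. F p t) C \<alpha> \<rho>"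
proof
  have H_t: "continuous_on (closure (sector \<phi>) - {0}) (\<lambda>p. H p t)"
    "\<forall>p\<in>sector \<phi>. cmod (H p t) < C * cmod p powr (\<alpha> - 1) * exp (\<rho> * cmod p)"
    using H t by (auto simp: in_H_def)
  show "cmod (H q t) \<le> C * cmod q powr (\<alpha> - 1) * exp (\<rho> * cmod q)"
    if "q \<in> closure (sector \<phi>)" "q \<noteq> 0" for q
  proof (rule continuous_le_on_closure_minus[OF _ _ _ zero_notin_sector that])
    show "continuous_on (closure (sector \<phi>) - {0}) (\<lambda>q. cmod (H q t))"
      using H_t(1) by (intro continuous_intros)
    show "continuous_on (closure (sector \<phi>) - {0}) (\<lambda>q. C * cmod q powr (\<alpha> - 1) * exp (\<rho> * cmod q))"
      by (intro continuous_intros) auto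
    show "cmod (H y t) \<le> C * cmod y powr (\<alpha> - 1) * exp (\<rho> * cmod y)" if "y \<in> sector \<phi>" for y
      using H_t(2) that by (simp add: less_imp_le)
  qed
qed (use assms in \<open>auto simp: in_H_def A_phi_def open_sector of_real_mult_in_sector
       of_real_mult_in_closure_sector\<close>)

section \<open>The weighted norm\<close>

lemma M0_nonneg: "0 \<le> M0"
proof -
  text \<open>The quotient is 0 at s = 0 (division by zero); the crude bound 8 makes the
    supremum meaningful.\<close>
  define e where "e s = 2 * (1 + s\<^sup>2) * (ln (1 + s\<^sup>2) + s * arctan s) / (s * (s\<^sup>2 + 4))" for s :: real
  have "e s \<le> 8" if "s \<in> {0..}" for s
  proof (cases "s = 0")
    case True
    thus ?thesis by (simp add: e_def)
  next
    case False
    hence s: "0 < s"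
      using that by auto
    have "ln (1 + s\<^sup>2) \<le> ln ((1 + s)\<^sup>2)"
      using s by (subst ln_le_cancel_iff) (auto simp: power2_eq_square algebra_simps add_pos_nonneg)
    also have "\<dots> = 2 * ln (1 + s)"
      by (simp add: ln_realpow)
    also have "\<dots> \<le> 2 * s"
      using ln_add_one_self_le_self[of s] s by simp
    finally have "ln (1 + s\<^sup>2) \<le> 2 * s" .
    moreover have "s * arctan s \<le> 2 * s"
      using arctan_ubound[of s] pi_less_4 s by (simp add: mult.commute[of s] mult_right_mono)
    ultimately have "2 * (1 + s\<^sup>2) * (ln (1 + s\<^sup>2) + s * arctan s) \<le> 2 * (1 + s\<^sup>2) * (4 * s)"
      by (intro mult_left_mono) auto
    also have "\<dots> \<le> 8 * (s * (s\<^sup>2 + 4))"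
      using s by (simp add: algebra_simps)
    finally show ?thesis
      using s by (simp add: e_def divide_le_eq add_pos_nonneg)
  qed
  hence "e 0 \<le> (SUP s\<in>{0..}. e s)"
    by (intro cSUP_upper bdd_aboveI2) auto
  thus ?thesis
    by (simp add: M0_def e_def[abs_def])
qed

lemma Kset_nonempty: "0 < \<phi> \<Longrightarrow> 0 \<le> T \<Longrightarrow> Kset \<phi> T \<noteq> {}"
  using one_in_sector[of \<phi>] closure_subset by (auto simp: Kset_def)

lemma weighted_le_SUP:
  "nu_bounded \<phi> T \<nu> G \<Longrightarrow> x \<in> Kset \<phi> T \<Longrightarrow> weighted \<nu> G x \<le> (SUP y\<in>Kset \<phi> T. weighted \<nu> G y)"
  unfolding nu_bounded_def by (rule cSUP_upper)

lemma nu_norm_le_nu_norm: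
  assumes K: "Kset \<phi> T \<noteq> {}" and G': "nu_bounded \<phi> T \<nu> G'"
    and le: "\<And>x. x \<in> Kset \<phi> T \<Longrightarrow> weighted \<nu> G x \<le> weighted \<nu> G' x"
  shows "nu_bounded \<phi> T \<nu> G" and "nu_norm \<phi> T \<nu> G \<le> nu_norm \<phi> T \<nu> G'"
proof -
  have "weighted \<nu> G x \<le> (SUP y\<in>Kset \<phi> T. weighted \<nu> G' y)" if "x \<in> Kset \<phi> T" for x
    by (rule order_trans[OF le weighted_le_SUP[OF G']]) (use that in auto)
  thus "nu_bounded \<phi> T \<nu> G"
    unfolding nu_bounded_def by (rule bdd_aboveI2)
  show "nu_norm \<phi> T \<nu> G \<le> nu_norm \<phi> T \<nu> G'"
    unfolding nu_norm_def using G' le unfolding nu_bounded_def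
    by (intro mult_left_mono M0_nonneg cSUP_mono[OF K]) auto
qed

lemma nu_norm_le:
  assumes "Kset \<phi> T \<noteq> {}" "\<And>x. x \<in> Kset \<phi> T \<Longrightarrow> weighted \<nu> G x \<le> B"
  shows "nu_bounded \<phi> T \<nu> G" and "nu_norm \<phi> T \<nu> G \<le> M0 * B"
  using assms unfolding nu_bounded_def nu_norm_def
  by (auto intro!: mult_left_mono M0_nonneg cSUP_least bdd_aboveI2)

section \<open>The convolution estimate\<close>

context
  fixes \<phi> T C \<alpha> \<rho> \<nu> :: real and H F :: "complex \<Rightarrow> real \<Rightarrow> complex"
  assumes conv: "\<And>t. t \<in> {0..T} \<Longrightarrow> cone_convolution (sector \<phi>) (\<lambda>p. H p t) (\<lambda>p. F p t) C \<alpha> \<rho>"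
    and bounded_F: "nu_bounded \<phi> T \<nu> F"
    and Kset: "Kset \<phi> T \<noteq> {}"
    and \<nu>: "1 \<le> \<nu> - \<rho>"
begin

lemma weighted_absconv_le:
  assumes "x \<in> Kset \<phi> T"
  shows "weighted \<nu> (absconv H F) x
           \<le> C * (SUP y\<in>Kset \<phi> T. weighted \<nu> F y) * (conv_const \<alpha> * (\<nu> - \<rho>) powr (- \<alpha>))"
proof -
  obtain p t where x: "x = (p, t)" "p \<in> closure (sector \<phi>)" "t \<in> {0..T}"
    using assms by (auto simp: Kset_def)
  have "\<forall>q\<in>closure (sector \<phi>). (1 + (cmod q)\<^sup>2) * exp (- \<nu> * cmod q) * cmod (F q t)
          \<le> (SUP y\<in>Kset \<phi> T. weighted \<nu> F y)"
    using weighted_le_SUP[OF bounded_F] x(3) by (force simp: Kset_def weighted_def)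
  thus ?thesis
    unfolding x weighted_def absconv_eq_integral
    using cone_convolution.weighted_integral_norm_conv_integrand_le[OF conv[OF x(3)] x(2) \<nu>]
      cone_convolution.norm_integral_conv_integrand_le_integral_norm(2)[OF conv[OF x(3)] x(2)]
    by simp
qed

lemma nu_norm_absconv_le:
  shows "nu_bounded \<phi> T \<nu> (absconv H F)"
    and "nu_norm \<phi> T \<nu> (absconv H F) \<le> C * conv_const \<alpha> * (\<nu> - \<rho>) powr (- \<alpha>) * nu_norm \<phi> T \<nu> F"
  using nu_norm_le[OF Kset weighted_absconv_le] by (simp_all add: nu_norm_def ac_simps)

lemma weighted_conv_le_weighted_absconv:
  assumes "x \<in> Kset \<phi> T"
  shows "weighted \<nu> (conv H F) x \<le> weighted \<nu> (absconv H F) x"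
proof -
  obtain p t where x: "x = (p, t)" "p \<in> closure (sector \<phi>)" "t \<in> {0..T}"
    using assms by (auto simp: Kset_def)
  show ?thesis
    unfolding x weighted_def conv_eq_integral absconv_eq_integral
    using cone_convolution.norm_integral_conv_integrand_le_integral_norm[OF conv[OF x(3)] x(2)]
    by (auto intro!: mult_left_mono simp: add_pos_nonneg)
qed

lemma A_phi_conv: "A_phi \<phi> T \<nu> (conv H F)"
  and nu_norm_conv_le: "nu_norm \<phi> T \<nu> (conv H F) \<le> nu_norm \<phi> T \<nu> (absconv H F)"
  using nu_norm_le_nu_norm[OF Kset nu_norm_absconv_le(1) weighted_conv_le_weighted_absconv]
    cone_convolution.holomorphic_on_integral_conv_integrand[OF conv]
    cone_convolution.continuous_on_integral_conv_integrand[OF conv]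
  by (auto simp: A_phi_def conv_eq_integral)

end

theorem lemma9:
  fixes \<phi> T C \<alpha> \<rho> :: real and H :: "complex \<Rightarrow> real \<Rightarrow> complex"
  assumes "0 < \<phi>" and "\<phi> < pi / 6" and "0 < T"
    and "0 < C" and "0 < \<alpha>" and "0 < \<rho>"
    and "in_H \<phi> T H C \<alpha> \<rho>"
  shows "\<exists>K>0. \<forall>\<nu> F. \<rho> + 1 < \<nu> \<longrightarrow> A_phi \<phi> T \<nu> F \<longrightarrow>
           A_phi \<phi> T \<nu> (conv H F) \<and>
           nu_bounded \<phi> T \<nu> (absconv H F) \<and>
           nu_norm \<phi> T \<nu> (conv H F) \<le> nu_norm \<phi> T \<nu> (absconv H F) \<and>
           nu_norm \<phi> T \<nu> (absconv H F) \<le> K * C * Gamma \<alpha> * (\<nu> - \<rho>) powr (- \<alpha>) * nu_norm \<phi> T \<nu> F"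
proof (intro exI[of _ "conv_const \<alpha> / Gamma \<alpha>"] conjI allI impI)
  have \<Gamma>: "0 < Gamma \<alpha>"
    using assms by simp
  thus "0 < conv_const \<alpha> / Gamma \<alpha>"
    using assms conv_const_pos by simp
  have Kset: "Kset \<phi> T \<noteq> {}"
    using assms by (simp add: Kset_nonempty)
  fix \<nu> F assume \<nu>: "\<rho> + 1 < \<nu>" and F: "A_phi \<phi> T \<nu> F"
  have conv: "cone_convolution (sector \<phi>) (\<lambda>p. H p t) (\<lambda>p. F p t) C \<alpha> \<rho>" if "t \<in> {0..T}" for t
    using assms F that by (intro cone_convolution_sector) auto
  have "nu_bounded \<phi> T \<nu> F" "1 \<le> \<nu> - \<rho>"
    using F \<nu> by (simp_all add: A_phi_def)
  note setting = conv this(1) Kset this(2)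
  show "A_phi \<phi> T \<nu> (conv H F)"
    by (rule A_phi_conv[OF setting])
  show "nu_bounded \<phi> T \<nu> (absconv H F)"
    by (rule nu_norm_absconv_le(1)[OF setting])
  show "nu_norm \<phi> T \<nu> (conv H F) \<le> nu_norm \<phi> T \<nu> (absconv H F)"
    by (rule nu_norm_conv_le[OF setting])
  show "nu_norm \<phi> T \<nu> (absconv H F) \<le> conv_const \<alpha> / Gamma \<alpha> * C * Gamma \<alpha> * (\<nu> - \<rho>) powr (- \<alpha>) * nu_norm \<phi> T \<nu> F"
    using nu_norm_absconv_le(2)[OF setting] \<Gamma> by (simp add: ac_simps)
qed

end
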